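(* Consider in $1+1$-dimensional Minkowski spacetime the system \begin{align*} &u^\mu \nabla_\mu \varrho + (\varrho+q) \nabla_\mu u^\mu = 0,\\ &(\varrho+q) u^\mu \nabla_\mu u^\nu + (g^{\nu\mu}+u^\nu u^\mu)\nabla_\mu q = 0,\\ &u^\mu \nabla_\mu q + c^2 (\varrho+q) \nabla_\mu u^\mu + f = 0, \end{align*} where $q=\Pi+p$, $f=\tau_0^{-1}(\Pi+\lambda\Pi^2)$, $c^2 = \partial_\varrho p + \frac{\zeta}{\tau_0(\varrho+q)}$, $-(u^0)^2+(u^1)^2=-1$, and $p,\zeta,\tau_0$ depend only on $\varrho$. A necessary condition for the existence of Riemann invariants for this system is that $p(\varrho)$ is constant.
   Context: This is the Müller-Israel-Stewart system with bulk viscosity written with unknowns $\Psi=(\varrho,u^1,q)^T$ in the form $\mathcal{A}^0\partial_0\Psi+\mathcal{A}^1\partial_1\Psi+\mathcal{B}=0$ (after dividing the momentum equation by $(u^0)^2$), where $\mathcal{A}^0 = \begin{pmatrix} u^0 & \frac{(\varrho+q)u^1}{u^0} & 0 \\ 0 & \frac{\varrho+q}{u^0} & \frac{u^1}{u^0} \\ 0 & \frac{c^2(\varrho+q)u^1}{u^0} & u^0 \end{pmatrix}$, $\mathcal{A}^1 = \begin{pmatrix} u^1 & \varrho+q & 0 \\ 0 & \frac{(\varrho+q)u^1}{(u^0)^2} & 1\\ 0 & c^2 (\varrho+q) & u^1 \end{pmatrix}$, $\mathcal{B}=(0,0,f)^T$. The left eigenvectors of $(\mathcal{A}^0)^{-1}\mathcal{A}^1$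 are $l^1=(-c^2,0,1)^T$, $l^2=(0,(\varrho+q)c/u^0,1)^T$, $l^3=(0,-(\varrho+q)c/u^0,1)^T$. Existence of Riemann invariants means these left eigenvectors are linearly independent and there exist functions $\Lambda^A(\Psi)$, $\alpha^A(\Psi)$ with $\Lambda^A l^A = \nabla_\Psi \alpha^A$ for $A=1,2,3$. *)

theory Defs
  imports "HOL-Analysis.Analysis"
begin

text \<open>State vector Psi = (rho, u^1, q) as an element of real^3:
  Psi$1 = rho, Psi$2 = u^1, Psi$3 = q.\<close>

definition u0 :: "real \<Rightarrow> real" where
  "u0 u = sqrt (1 + u\<^sup>2)"

definition csq :: "(real \<Rightarrow> real) \<Rightarrow> (real \<Rightarrow> real) \<Rightarrow> (real \<Rightarrow> real) \<Rightarrow> real \<Rightarrow> real \<Rightarrow> real" where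
  "csq p zeta tau0 rho q = deriv p rho + zeta rho / (tau0 rho * (rho + q))"

definition sound :: "(real \<Rightarrow> real) \<Rightarrow> (real \<Rightarrow> real) \<Rightarrow> (real \<Rightarrow> real) \<Rightarrow> real \<Rightarrow> real \<Rightarrow> real" where
  "sound p zeta tau0 rho q = sqrt (csq p zeta tau0 rho q)"

text \<open>Left eigenvectors l^1, l^2, l^3 of (A^0)^{-1} A^1.\<close>
definition lvec :: "(real \<Rightarrow> real) \<Rightarrow> (real \<Rightarrow> real) \<Rightarrow> (real \<Rightarrow> real) \<Rightarrow> nat \<Rightarrow> real^3 \<Rightarrow> real^3" where
  "lvec p zeta tau0 A Psi =
     (let rho = Psi$1; u = Psi$2; q = Psi$3; c = sound p zeta tau0 rho q in
      if A = 1 then vector [- csq p zeta tau0 rho q, 0, 1]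
      else if A = 2 then vector [0, (rho + q) * c / u0 u, 1]
      else vector [0, - ((rho + q) * c / u0 u), 1])"

definition has_Riemann_invariants ::
  "(real \<Rightarrow> real) \<Rightarrow> (real \<Rightarrow> real) \<Rightarrow> (real \<Rightarrow> real) \<Rightarrow> (real^3) set \<Rightarrow> bool" where
  "has_Riemann_invariants p zeta tau0 D \<longleftrightarrow>
     (\<forall>Psi\<in>D. \<forall>a b c. a *\<^sub>R lvec p zeta tau0 1 Psi + b *\<^sub>R lvec p zeta tau0 2 Psi
                         + c *\<^sub>R lvec p zeta tau0 3 Psi = 0 \<longrightarrow> a = 0 \<and> b = 0 \<and> c = 0) \<and>
     (\<forall>A\<in>{1,2,3::nat}. \<exists>(Lambda :: real^3 \<Rightarrow> real) (alpha :: real^3 \<Rightarrow> real).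
        \<forall>Psi\<in>D. Lambda Psi \<noteq> 0 \<and>
          (alpha has_derivative (\<lambda>h. (Lambda Psi *\<^sub>R lvec p zeta tau0 A Psi) \<bullet> h)) (at Psi))"

definition state_domain :: "(real^3) set" where
  "state_domain = {Psi. Psi$1 > 0 \<and> Psi$1 + Psi$3 > 0}"

end

theory Submission
  imports Defs
begin

text \<open>Since l^2 has no rho-component,
  a Riemann invariant alpha^2 does not depend on rho on the convex state domain, hence neither does
  its gradient Lambda^2 l^2; comparing its last two components shows that (rho + q) c depends on
  q alone. With s = rho + q and z = zeta/tau0 one has ((rho + q) c)^2 = s^2 p'(rho) + s z(rho), so
  for all s, d > 0 the quadratic s^2 p'(r) + s z(r) in s equals (s + d)^2 p'(r + d) + (s + d) z(r + d).
  Comparing coefficients gives z(r) = d p'(r) for every d > 0, hence p' = 0.\<close>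

lemma has_field_derivative_along_line:
  fixes f :: "'a::real_inner \<Rightarrow> real"
  assumes "(f has_derivative (\<lambda>h. w \<bullet> h)) (at (x + t *\<^sub>R v))"
  shows "((\<lambda>s. f (x + s *\<^sub>R v)) has_field_derivative (w \<bullet> v)) (at t)"
proof -
  have "((\<lambda>s. x + s *\<^sub>R v) has_derivative (\<lambda>h. h *\<^sub>R v)) (at t)"
    by (auto intro!: derivative_eq_intros)
  from has_derivative_compose[OF this assms] show ?thesis
    by (simp add: has_field_derivative_def mult_commute_abs)
qed

lemma const_along_line_if_gradient_orthogonal:
  fixes f :: "'a::real_inner \<Rightarrow> real"
  assumes "convex S"
    and grad: "\<And>y. y \<in> S \<Longrightarrow> (f has_derivative (\<lambda>h. g y \<bullet> h)) (at y)"
    and orth: "\<And>y. y \<in> S \<Longrightarrow> g y \<bullet> v = 0"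
    and "x \<in> S" "x + d *\<^sub>R v \<in> S"
  shows "f (x + d *\<^sub>R v) = f x"
proof -
  define T where "T = (\<lambda>s. s *\<^sub>R v) -` ((\<lambda>y. y - x) ` S)"
  have T_iff: "s \<in> T \<longleftrightarrow> x + s *\<^sub>R v \<in> S" for s
    by (force simp: T_def)
  have "convex T"
    unfolding T_def using \<open>convex S\<close>
    by (intro convex_linear_vimage convex_translation_subtract) (auto intro: linearI simp: algebra_simps)
  have "\<exists>c. \<forall>s\<in>T. f (x + s *\<^sub>R v) = c"
  proof (rule has_field_derivative_zero_constant[OF \<open>convex T\<close>])
    fix s assume "s \<in> T"
    then have "((\<lambda>s. f (x + s *\<^sub>R v)) has_field_derivative 0) (at s)"
      using has_field_derivative_along_line[OF grad[of "x + s *\<^sub>R v"]] orth by (simp add: T_iff)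
    then show "((\<lambda>s. f (x + s *\<^sub>R v)) has_field_derivative 0) (at s within T)"
      by (rule has_field_derivative_at_within)
  qed
  moreover have "0 \<in> T" "d \<in> T"
    using assms by (simp_all add: T_iff)
  ultimately show ?thesis
    by force
qed

lemma gradient_translation_invariant_if_orthogonal:
  fixes f :: "'a::real_inner \<Rightarrow> real"
  assumes "open S" "convex S"
    and grad: "\<And>y. y \<in> S \<Longrightarrow> (f has_derivative (\<lambda>h. g y \<bullet> h)) (at y)"
    and orth: "\<And>y. y \<in> S \<Longrightarrow> g y \<bullet> v = 0"
    and "x \<in> S" "x + d *\<^sub>R v \<in> S"
  shows "g (x + d *\<^sub>R v) = g x"
proof -
  define U where "U = S \<inter> (\<lambda>y. y + d *\<^sub>R v) -` S"
  have "open U"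
    unfolding U_def using \<open>open S\<close> by (intro open_Int open_vimage) (auto intro!: continuous_intros)
  have "((\<lambda>y. y + d *\<^sub>R v) has_derivative id) (at x)"
    by (auto intro!: derivative_eq_intros simp: id_def)
  from has_derivative_compose[OF this grad[OF \<open>x + d *\<^sub>R v \<in> S\<close>]]
  have "((\<lambda>y. f (y + d *\<^sub>R v)) has_derivative (\<lambda>h. g (x + d *\<^sub>R v) \<bullet> h)) (at x)"
    by simp
  then have "(f has_derivative (\<lambda>h. g (x + d *\<^sub>R v) \<bullet> h)) (at x)"
  proof (rule has_derivative_transform_within_open[OF _ \<open>open U\<close>])
    show "x \<in> U"
      using assms by (simp add: U_def)
    show "f (y + d *\<^sub>R v) = f y" if "y \<in> U" for y
      using const_along_line_if_gradient_orthogonal[OF \<open>convex S\<close> grad orth] that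
      by (simp add: U_def)
  qed
  with grad[OF \<open>x \<in> S\<close>] have "(\<lambda>h. g (x + d *\<^sub>R v) \<bullet> h) = (\<lambda>h. g x \<bullet> h)"
    by (rule has_derivative_unique[rotated])
  then show ?thesis
    by (metis vector_eq_rdot)
qed

lemma open_state_domain: "open state_domain"
  unfolding state_domain_def
  by (intro open_Collect_conj open_Collect_less) (auto intro!: continuous_intros)

lemma convex_state_domain: "convex state_domain"
proof -
  have "state_domain = {Psi. axis 1 1 \<bullet> Psi > 0} \<inter> {Psi. (axis 1 1 + axis 3 1) \<bullet> Psi > (0::real)}"
    by (auto simp: state_domain_def inner_axis' inner_add_left)
  then show ?thesis
    by (metis convex_Int convex_halfspace_gt)
qed

lemma rho_plus_q_sound_independent_of_rho:
  assumes inv2: "\<forall>Psi\<in>state_domain. L Psi \<noteq> 0 \<and>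
      (alpha has_derivative (\<lambda>h. (L Psi *\<^sub>R lvec p zeta tau0 2 Psi) \<bullet> h)) (at Psi)"
    and "r1 > 0" "r1 + q > 0" "r2 > 0" "r2 + q > 0"
  shows "(r1 + q) * sound p zeta tau0 r1 q = (r2 + q) * sound p zeta tau0 r2 q"
proof -
  define g where "g Psi = L Psi *\<^sub>R lvec p zeta tau0 2 Psi" for Psi
  define Psi1 :: "real^3" where "Psi1 = vector [r1, 0, q]"
  define Psi2 :: "real^3" where "Psi2 = vector [r2, 0, q]"
  have shift: "Psi2 = Psi1 + (r2 - r1) *\<^sub>R axis 1 1"
    by (simp add: Psi1_def Psi2_def vec_eq_iff forall_3 axis_def)
  have grad: "(alpha has_derivative (\<lambda>h. g Psi \<bullet> h)) (at Psi)" if "Psi \<in> state_domain" for Psi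
    using inv2 that by (simp add: g_def)
  have orth: "g Psi \<bullet> axis 1 1 = 0" if "Psi \<in> state_domain" for Psi
    by (simp add: g_def lvec_def Let_def inner_axis)
  have "Psi1 \<in> state_domain" "Psi2 \<in> state_domain"
    using assms by (simp_all add: Psi1_def Psi2_def state_domain_def)
  then have "g Psi2 = g Psi1"
    unfolding shift
    using gradient_translation_invariant_if_orthogonal[OF open_state_domain convex_state_domain] grad orth
    by blast
  then have "L Psi2 = L Psi1"
    and "L Psi2 * ((r2 + q) * sound p zeta tau0 r2 q) = L Psi1 * ((r1 + q) * sound p zeta tau0 r1 q)"
    by (auto simp: g_def lvec_def Let_def Psi1_def Psi2_def u0_def vec_eq_iff forall_3)
  moreover have "L Psi1 \<noteq> 0"
    using inv2 \<open>Psi1 \<in> state_domain\<close> by blast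
  ultimately show ?thesis
    by simp
qed

lemma sq_rho_plus_q_sound:
  assumes "r + q > 0" "csq p zeta tau0 r q \<ge> 0"
  shows "((r + q) * sound p zeta tau0 r q)\<^sup>2 = (r + q)\<^sup>2 * deriv p r + (r + q) * (zeta r / tau0 r)"
proof -
  have "((r + q) * sound p zeta tau0 r q)\<^sup>2 = (r + q)\<^sup>2 * csq p zeta tau0 r q"
    using assms(2) by (simp add: sound_def power_mult_distrib)
  also have "\<dots> = (r + q)\<^sup>2 * deriv p r + (r + q)\<^sup>2 * (zeta r / (tau0 r * (r + q)))"
    by (simp add: csq_def distrib_left)
  also have "\<dots> = (r + q)\<^sup>2 * deriv p r + (r + q) * (zeta r / tau0 r)"
    using assms(1) by (simp add: power2_eq_square)
  finally show ?thesis .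
qed

lemma quadratic_shift_coeffs:
  fixes a b a' b' d :: real
  assumes "d \<noteq> 0" and shift: "\<And>s. s > 0 \<Longrightarrow> s\<^sup>2 * a + s * b = (s + d)\<^sup>2 * a' + (s + d) * b'"
  shows "b = d * a"
proof -
  have 1: "a + b = (1 + d)\<^sup>2 * a' + (1 + d) * b'"
    and 2: "4 * a + 2 * b = (2 + d)\<^sup>2 * a' + (2 + d) * b'"
    and 3: "9 * a + 3 * b = (3 + d)\<^sup>2 * a' + (3 + d) * b'"
    using shift[of 1] shift[of 2] shift[of 3] by simp_all
  have "a = a'" "b = 2 * d * a' + b'" "d * (d * a' + b') = 0"
    using 1 2 3 by (simp_all add: power2_eq_square algebra_simps)
  moreover from this(3) \<open>d \<noteq> 0\<close> have "b' = - (d * a')"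
    by (simp add: add_eq_0_iff)
  ultimately show ?thesis
    by (simp add: algebra_simps)
qed

lemma shift_identity_if_Riemann_invariant:
  assumes inv2: "\<forall>Psi\<in>state_domain. L Psi \<noteq> 0 \<and>
      (alpha has_derivative (\<lambda>h. (L Psi *\<^sub>R lvec p zeta tau0 2 Psi) \<bullet> h)) (at Psi)"
    and csq_pos: "\<forall>Psi\<in>state_domain. csq p zeta tau0 (Psi$1) (Psi$3) > 0"
    and "r > 0" "s > 0" "d > 0"
  shows "s\<^sup>2 * deriv p r + s * (zeta r / tau0 r) =
    (s + d)\<^sup>2 * deriv p (r + d) + (s + d) * (zeta (r + d) / tau0 (r + d))"
proof -
  have sq: "((r' + q) * sound p zeta tau0 r' q)\<^sup>2 = (r' + q)\<^sup>2 * deriv p r' + (r' + q) * (zeta r' / tau0 r')"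
    if "r' > 0" "r' + q > 0" for r' q
    using sq_rho_plus_q_sound[of r' q] csq_pos[rule_format, of "vector [r', 0, q]"] that
    by (simp add: state_domain_def)
  have "s\<^sup>2 * deriv p r + s * (zeta r / tau0 r) = (s * sound p zeta tau0 r (s - r))\<^sup>2"
    using sq[of r "s - r"] assms by simp
  also have "\<dots> = ((s + d) * sound p zeta tau0 (r + d) (s - r))\<^sup>2"
  proof -
    have "(r + (s - r)) * sound p zeta tau0 r (s - r) = (r + d + (s - r)) * sound p zeta tau0 (r + d) (s - r)"
      by (rule rho_plus_q_sound_independent_of_rho[OF inv2]) (use assms in auto)
    then show ?thesis
      by (simp add: algebra_simps)
  qed
  also have "\<dots> = (s + d)\<^sup>2 * deriv p (r + d) + (s + d) * (zeta (r + d) / tau0 (r + d))"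
    using sq[of "r + d" "s - r"] assms by (simp add: add.commute)
  finally show ?thesis .
qed

theorem mainTheorem12:
  fixes p zeta tau0 :: "real \<Rightarrow> real"
  assumes "\<forall>rho>0. p differentiable (at rho)"
    and "\<forall>rho>0. tau0 rho > 0"
    and "\<forall>Psi\<in>state_domain. csq p zeta tau0 (Psi$1) (Psi$3) > 0"
    and "has_Riemann_invariants p zeta tau0 state_domain"
  shows "\<exists>C. \<forall>rho>0. p rho = C"
proof -
  obtain L alpha where inv2: "\<forall>Psi\<in>state_domain. L Psi \<noteq> 0 \<and>
      (alpha has_derivative (\<lambda>h. (L Psi *\<^sub>R lvec p zeta tau0 2 Psi) \<bullet> h)) (at Psi)"
    using assms(4) unfolding has_Riemann_invariants_def by blast
  note shift = shift_identity_if_Riemann_invariant[OF inv2 assms(3)]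
  have deriv_p: "deriv p r = 0" if "r > 0" for r
  proof -
    have "zeta r / tau0 r = d * deriv p r" if "d > 0" for d
      using that shift[OF \<open>r > 0\<close> _ that]
      by (intro quadratic_shift_coeffs[where a' = "deriv p (r + d)" and b' = "zeta (r + d) / tau0 (r + d)"])
        auto
    from this[of 1] this[of 2] show ?thesis
      by simp
  qed
  have "(p has_real_derivative 0) (at rho)" if "rho > 0" for rho
    using assms(1) deriv_p[OF that] that by (metis DERIV_deriv_iff_real_differentiable)
  then have "\<exists>C. \<forall>rho\<in>{0<..}. p rho = C"
    by (intro has_field_derivative_zero_constant) (auto intro: has_field_derivative_at_within)
  then show ?thesis
    by auto
qed

end
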